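(* Let $p$ be an odd prime and $1\le\ell\le p-1$ with Legendre symbol $\left(\frac{8\ell+1}{p}\right)=-1$. Then for all $n,k\ge0$, $$b\!\left(4p^{2k+3}n+\frac{(8\ell+1)p^{2k+2}-1}{2}\right)\equiv 0\pmod 8.$$
   Context: The mock theta function $\mathcal{B}(q)=\sum_{n\ge0}\frac{q^n(-q;q^2)_n}{(q;q^2)_{n+1}}=\sum_{n\ge0}b(n)q^n$, where $(a;q)_n=\prod_{j=0}^{n-1}(1-aq^j)$. *)

theory Defs
  imports "HOL-Computational_Algebra.Formal_Power_Series" "HOL-Number_Theory.Number_Theory"
begin

definition qpoch :: "'a::comm_ring_1 fps \<Rightarrow> 'a fps \<Rightarrow> nat \<Rightarrow> 'a fps" where
  "qpoch a q n = (\<Prod>j<n. 1 - a * q ^ j)"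

definition Bterm :: "nat \<Rightarrow> rat fps" where
  "Bterm m = fps_X ^ m * qpoch (- fps_X) (fps_X ^ 2) m / qpoch fps_X (fps_X ^ 2) (Suc m)"

(* coefficient b(n) of q^n in B(q). The m-th summand is divisible by q^m,
   so only summands m <= n contribute to the coefficient of q^n. *)
definition b :: "nat \<Rightarrow> rat" where
  "b n = fps_nth (\<Sum>m\<le>n. Bterm m) n"

end

theory Submission
  imports Defs
begin

(*
  Put u = q^(2i+1) and B_i = sum_n u^n (-u;q^2)_n / (u;q^2)_(n+1), so that B_0 = B.
  Comparing B_i termwise with C_i = sum_n (u q^2)^n (-u;q^2)_n / (u;q^2)_(n+1) gives
    B_i = (1 + u^2)/(1 - u)^2 + q^(4i+4) ((1 + u)/(1 - u))^2 B_(i+1),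
  and unrolling this recurrence
    B(q) = sum_n q^(2n(n+1)) prod_(i<n) ((1 + q^(2i+1))/(1 - q^(2i+1)))^2 (1 + q^(4n+2))/(1 - q^(2n+1))^2.
  For x = q^d we have ((1 + x)/(1 - x))^2 = 1 + 4 w and (1 + x^2)/(1 - x)^2 = 1 + 2 w with
  w = sum_j j x^j, and for odd d the coefficient j of q^(dj) is divisible by 4 whenever 4 | dj.
  Hence at exponents N divisible by 4 each product is congruent mod 8 to 1 or 0 according as
  N = 0 or not, and b(N) is congruent mod 8 to the number of n with N = 2n(n+1).
  For the N of the theorem, 4 | N and 2N + 1 = p^(2k+2) (8pn + 8l + 1); were N = 2n(n+1),
  then 2N + 1 = (2n+1)^2 and 8l + 1 would be a quadratic residue mod p.
*)

unbundle fps_syntax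

lemma power_split: "m = k + l \<Longrightarrow> (x::'a::monoid_mult) ^ m = x ^ k * x ^ l"
  by (simp add: power_add)

lemma linear_recurrence_unroll:
  fixes F a c :: "nat \<Rightarrow> 'a::comm_semiring_1"
  assumes "\<And>i. F i = a i + c i * F (Suc i)"
  shows "F 0 = (\<Sum>n<K. (\<Prod>i<n. c i) * a n) + (\<Prod>i<K. c i) * F K"
proof (induction K)
  case (Suc K)
  then show ?case
    using assms[of K] by (simp add: algebra_simps)
qed simp

lemma prod_one_plus_four_mult:
  fixes a :: "nat \<Rightarrow> 'a::comm_ring_1"
  shows "\<exists>y. (\<Prod>i<n. 1 + 4 * a i) = 1 + 4 * (\<Sum>i<n. a i) + 8 * y"
proof (induction n)
  case (Suc n)
  then obtain y where y: "(\<Prod>i<n. 1 + 4 * a i) = 1 + 4 * (\<Sum>i<n. a i) + 8 * y" ..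
  have "(\<Prod>i<Suc n. 1 + 4 * a i)
      = 1 + 4 * (\<Sum>i<Suc n. a i) + 8 * (y + 2 * (\<Sum>i<n. a i) * a n + 4 * y * a n)"
    unfolding prod.lessThan_Suc sum.lessThan_Suc y by (simp add: algebra_simps)
  then show ?case ..
qed (auto intro: exI[of _ 0])

lemma fps_numeral_mult_nth: "(numeral c * f) $ m = numeral c * f $ m"
  by (simp add: numeral_fps_const)

definition of_int_fps :: "int fps \<Rightarrow> 'a::ring_1 fps" where
  "of_int_fps f = Abs_fps (\<lambda>n. of_int (f $ n))"

lemma of_int_fps_nth [simp]: "of_int_fps f $ n = of_int (f $ n)"
  by (simp add: of_int_fps_def)

lemma of_int_fps_1 [simp]: "of_int_fps 1 = 1"
  by (rule fps_ext) simp

lemma of_int_fps_X [simp]: "of_int_fps fps_X = fps_X"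
  by (rule fps_ext) simp

lemma of_int_fps_add [simp]: "of_int_fps (f + g) = of_int_fps f + of_int_fps g"
  by (rule fps_ext) simp

lemma of_int_fps_diff [simp]: "of_int_fps (f - g) = of_int_fps f - of_int_fps g"
  by (rule fps_ext) simp

lemma of_int_fps_mult [simp]: "of_int_fps (f * g) = of_int_fps f * of_int_fps g"
  by (rule fps_ext) (simp add: fps_mult_nth)

lemma of_int_fps_power [simp]: "of_int_fps (f ^ k) = of_int_fps f ^ k"
  by (induction k) simp_all

lemma of_int_fps_prod [simp]: "of_int_fps (prod F A) = (\<Prod>x\<in>A. of_int_fps (F x))"
  by (induction A rule: infinite_finite_induct) simp_all

(* No division is needed: everything lives in int fps, with geom d playing the role of
   1/(1 - q^d), so the coefficients of B are visibly integers. *)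
definition geom :: "nat \<Rightarrow> int fps" where
  "geom d = Abs_fps (\<lambda>m. of_bool (d dvd m))"

definition geom_weighted :: "nat \<Rightarrow> int fps" where
  "geom_weighted d = Abs_fps (\<lambda>m. if d dvd m then int (m div d) else 0)"

lemma one_minus_X_power_mult_geom:
  assumes "d > 0"
  shows "(1 - fps_X ^ d) * geom d = 1"
proof (rule fps_ext)
  fix m
  show "((1 - fps_X ^ d) * geom d) $ m = 1 $ m"
    using assms by (auto simp: algebra_simps geom_def fps_X_power_mult_nth dvd_minus_self
        dest: dvd_imp_le)
qed

lemma geom_weighted_eq:
  assumes "d > 0"
  shows "geom_weighted d = fps_X ^ d * geom d ^ 2"
proof -
  have weighted: "(1 - fps_X ^ d) * geom_weighted d = fps_X ^ d * geom d"
  proof (rule fps_ext)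
    fix m
    have "int (m div d) - int ((m - d) div d) = 1" if "d dvd m" "d \<le> m"
    proof -
      obtain k where k: "m = d * k" using \<open>d dvd m\<close> ..
      then have "m - d = d * (k - 1)" by (simp add: right_diff_distrib')
      with k that assms show ?thesis by auto
    qed
    then show "((1 - fps_X ^ d) * geom_weighted d) $ m = (fps_X ^ d * geom d) $ m"
      using assms
      by (auto simp: algebra_simps geom_def geom_weighted_def fps_X_power_mult_nth dvd_minus_self)
  qed
  have "geom_weighted d = (geom d * (1 - fps_X ^ d)) * geom_weighted d"
    using one_minus_X_power_mult_geom[OF assms] by (simp add: mult.commute)
  also have "\<dots> = geom d * (fps_X ^ d * geom d)"
    by (simp only: mult.assoc weighted)
  finally show ?thesis
    by (simp add: power2_eq_square ac_simps)
qed

lemma one_plus_X_power_sq_mult_geom_sq: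
  assumes "d > 0"
  shows "(1 + fps_X ^ d) ^ 2 * geom d ^ 2 = 1 + 4 * geom_weighted d"
proof -
  have "(1 + fps_X ^ d) ^ 2 * geom d ^ 2
      = ((1 - fps_X ^ d) * geom d) ^ 2 + 4 * (fps_X ^ d * geom d ^ 2)"
    by (simp add: algebra_simps power2_eq_square)
  then show ?thesis
    using assms by (simp add: one_minus_X_power_mult_geom geom_weighted_eq)
qed

lemma one_plus_X_power_double_mult_geom_sq:
  assumes "d > 0"
  shows "(1 + (fps_X ^ d) ^ 2) * geom d ^ 2 = 1 + 2 * geom_weighted d"
proof -
  have "(1 + (fps_X ^ d) ^ 2) * geom d ^ 2
      = ((1 - fps_X ^ d) * geom d) ^ 2 + 2 * (fps_X ^ d * geom d ^ 2)"
    by (simp add: algebra_simps power2_eq_square)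
  then show ?thesis
    using assms by (simp add: one_minus_X_power_mult_geom geom_weighted_eq)
qed

lemma four_dvd_geom_weighted_nth:
  assumes "odd d" "4 dvd m"
  shows "4 dvd geom_weighted d $ m"
proof (cases "d dvd m")
  case True
  then obtain q where q: "m = d * q" by blast
  have "coprime ((2::nat) ^ 2) d"
    using assms(1) by (subst coprime_power_left_iff) simp
  then have "coprime 4 d"
    by simp
  with assms(2) q have "4 dvd q"
    by (metis coprime_dvd_mult_right_iff)
  then show ?thesis
    using True assms(1) q by (auto simp: geom_weighted_def)
qed (simp add: geom_weighted_def)

definition order_ge_index :: "(nat \<Rightarrow> 'a::zero fps) \<Rightarrow> bool" where
  "order_ge_index f \<longleftrightarrow> (\<forall>n j. j < n \<longrightarrow> f n $ j = 0)"

(* Equals the limit of the partial sums only when order_ge_index f. *)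
definition fps_infsum :: "(nat \<Rightarrow> 'a::comm_monoid_add fps) \<Rightarrow> 'a fps" where
  "fps_infsum f = Abs_fps (\<lambda>N. \<Sum>n\<le>N. f n $ N)"

lemma order_ge_index_X_power_mult:
  assumes "\<And>n. n \<le> e n"
  shows "order_ge_index (\<lambda>n. fps_X ^ e n * F n)"
  using assms by (auto simp: order_ge_index_def fps_X_power_mult_nth dest: order.strict_trans2)

lemma order_ge_index_Suc: "order_ge_index f \<Longrightarrow> order_ge_index (\<lambda>n. f (Suc n))"
  by (auto simp: order_ge_index_def)

lemma order_ge_index_mult_left:
  fixes f :: "nat \<Rightarrow> 'a::comm_semiring_1 fps"
  shows "order_ge_index f \<Longrightarrow> order_ge_index (\<lambda>n. a * f n)"
  by (auto simp: order_ge_index_def fps_mult_nth intro!: sum.neutral)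

lemma fps_infsum_nth:
  assumes "order_ge_index f" "N < K"
  shows "fps_infsum f $ N = (\<Sum>n<K. f n) $ N"
proof -
  have "(\<Sum>n<K. f n $ N) = (\<Sum>n\<le>N. f n $ N)"
    using assms by (intro sum.mono_neutral_right) (auto simp: order_ge_index_def)
  then show ?thesis
    by (simp add: fps_infsum_def fps_sum_nth)
qed

lemma fps_infsum_add: "fps_infsum (\<lambda>n. f n + g n) = fps_infsum f + fps_infsum g"
  by (rule fps_ext) (simp add: fps_infsum_def sum.distrib)

lemma fps_infsum_diff:
  fixes f g :: "nat \<Rightarrow> 'a::ab_group_add fps"
  shows "fps_infsum (\<lambda>n. f n - g n) = fps_infsum f - fps_infsum g"
  by (rule fps_ext) (simp add: fps_infsum_def sum_subtractf)

lemma fps_infsum_mult_left: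
  fixes f :: "nat \<Rightarrow> 'a::comm_semiring_1 fps"
  assumes "order_ge_index f"
  shows "fps_infsum (\<lambda>n. a * f n) = a * fps_infsum f"
proof (rule fps_ext)
  fix N
  have "(a * fps_infsum f) $ N = (a * (\<Sum>n<Suc N. f n)) $ N"
    unfolding fps_mult_nth using fps_infsum_nth[OF assms, of _ "Suc N"]
    by (intro sum.cong refl) (simp del: sum.lessThan_Suc)
  also have "\<dots> = (\<Sum>n<Suc N. a * f n) $ N"
    by (simp only: sum_distrib_left)
  also have "\<dots> = fps_infsum (\<lambda>n. a * f n) $ N"
    using order_ge_index_mult_left[OF assms] by (rule fps_infsum_nth[symmetric]) simp
  finally show "fps_infsum (\<lambda>n. a * f n) $ N = (a * fps_infsum f) $ N" ..
qed

lemma fps_infsum_shift: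
  assumes "order_ge_index f"
  shows "fps_infsum f = f 0 + fps_infsum (\<lambda>n. f (Suc n))"
proof (rule fps_ext)
  fix N
  have "fps_infsum f $ N = (\<Sum>n<Suc (Suc N). f n) $ N"
    using assms by (rule fps_infsum_nth) simp
  also have "\<dots> = f 0 $ N + (\<Sum>n<Suc N. f (Suc n)) $ N"
    by (simp only: sum.lessThan_Suc_shift fps_add_nth)
  also have "(\<Sum>n<Suc N. f (Suc n)) $ N = fps_infsum (\<lambda>n. f (Suc n)) $ N"
    using order_ge_index_Suc[OF assms] by (rule fps_infsum_nth[symmetric]) simp
  finally show "fps_infsum f $ N = (f 0 + fps_infsum (\<lambda>n. f (Suc n))) $ N"
    by simp
qed

definition plus_poch :: "nat \<Rightarrow> nat \<Rightarrow> int fps" where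
  "plus_poch i n = (\<Prod>j<n. 1 + fps_X ^ (2 * i + 1 + 2 * j))"

definition geom_poch :: "nat \<Rightarrow> nat \<Rightarrow> int fps" where
  "geom_poch i n = (\<Prod>j\<le>n. geom (2 * i + 1 + 2 * j))"

definition B_term :: "nat \<Rightarrow> nat \<Rightarrow> int fps" where
  "B_term i n = fps_X ^ ((2 * i + 1) * n) * plus_poch i n * geom_poch i n"

definition C_term :: "nat \<Rightarrow> nat \<Rightarrow> int fps" where
  "C_term i n = fps_X ^ ((2 * i + 3) * n) * plus_poch i n * geom_poch i n"

definition B_series :: "nat \<Rightarrow> int fps" where
  "B_series i = fps_infsum (B_term i)"

definition C_series :: "nat \<Rightarrow> int fps" where
  "C_series i = fps_infsum (C_term i)"

lemma plus_poch_Suc: "plus_poch i (Suc n) = plus_poch i n * (1 + fps_X ^ (2 * i + 1 + 2 * n))"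
  by (simp add: plus_poch_def)

lemma geom_poch_Suc: "geom_poch i (Suc n) = geom_poch i n * geom (2 * i + 3 + 2 * n)"
  unfolding geom_poch_def prod.atMost_Suc by (intro arg_cong2[where f="(*)"] arg_cong[where f=geom]) simp_all

lemma plus_poch_shift: "plus_poch i (Suc n) = (1 + fps_X ^ (2 * i + 1)) * plus_poch (Suc i) n"
  unfolding plus_poch_def prod.lessThan_Suc_shift by (simp add: algebra_simps)

lemma geom_poch_shift: "geom_poch i (Suc n) = geom (2 * i + 1) * geom_poch (Suc i) n"
  unfolding geom_poch_def atMost_Suc_eq_insert_0 by (simp add: algebra_simps prod.reindex)

lemma order_ge_index_B_term: "order_ge_index (B_term i)"
  unfolding B_term_def mult.assoc by (rule order_ge_index_X_power_mult) simp

lemma order_ge_index_C_term: "order_ge_index (C_term i)"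
  unfolding C_term_def mult.assoc by (rule order_ge_index_X_power_mult) simp

lemma B_term_0: "B_term i 0 = geom (2 * i + 1)"
  by (simp add: B_term_def plus_poch_def geom_poch_def)

lemma C_term_0: "C_term i 0 = geom (2 * i + 1)"
  by (simp add: C_term_def plus_poch_def geom_poch_def)

lemma B_term_Suc:
  "B_term i (Suc n) - fps_X ^ (2 * i + 1) * C_term i (Suc n)
     = fps_X ^ (2 * i + 1) * B_term i n + fps_X ^ (4 * i + 2) * C_term i n"
proof -
  define u :: "int fps" where "u = fps_X ^ (2 * i + 1)"
  define v :: "int fps" where "v = fps_X ^ (2 * n)"
  define w :: "int fps" where "w = fps_X ^ 2"
  define P :: "int fps" where "P = fps_X ^ ((2 * i + 1) * n)"
  define F where "F = plus_poch i n * geom_poch i n"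
  define g where "g = geom (2 * i + 3 + 2 * n)"
  have "u * v * w = fps_X ^ (2 * i + 3 + 2 * n)"
    unfolding u_def v_def w_def power_add[symmetric] by (rule arg_cong[where f="(^) fps_X"]) simp
  then have g: "(1 - u * v * w) * g = 1"
    using one_minus_X_power_mult_geom[of "2 * i + 3 + 2 * n"] by (simp add: g_def)
  have "fps_X ^ (2 * i + 1 + 2 * n) = u * v"
    unfolding u_def v_def by (rule power_split) simp
  then have poch: "plus_poch i (Suc n) * geom_poch i (Suc n) = F * (1 + u * v) * g"
    unfolding F_def g_def plus_poch_Suc geom_poch_Suc by (simp only: ac_simps)
  have "fps_X ^ ((2 * i + 1) * Suc n) = P * u"
    unfolding P_def u_def by (rule power_split) simp
  then have B_Suc: "B_term i (Suc n) = P * u * (F * (1 + u * v) * g)"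
    by (simp only: B_term_def mult.assoc poch)
  have "fps_X ^ ((2 * i + 3) * Suc n) = P * v * u * w"
    unfolding P_def v_def u_def w_def power_add[symmetric]
    by (rule arg_cong[where f="(^) fps_X"]) (simp add: algebra_simps)
  then have C_Suc: "C_term i (Suc n) = P * v * u * w * (F * (1 + u * v) * g)"
    by (simp only: C_term_def mult.assoc poch)
  have "fps_X ^ ((2 * i + 3) * n) = P * v"
    unfolding P_def v_def by (rule power_split) (simp add: algebra_simps)
  then have C: "C_term i n = P * v * F"
    by (simp only: C_term_def F_def mult.assoc)
  have B: "B_term i n = P * F"
    by (simp only: B_term_def P_def F_def mult.assoc)
  have "fps_X ^ (4 * i + 2) = u ^ 2"
    unfolding u_def power_mult[symmetric] by (rule arg_cong[where f="(^) fps_X"]) simp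
  moreover have "B_term i (Suc n) - u * C_term i (Suc n)
      = P * u * F * (1 + u * v) * ((1 - u * v * w) * g)"
    unfolding B_Suc C_Suc by (simp add: algebra_simps)
  ultimately show ?thesis
    unfolding g B C u_def[symmetric] by (simp add: algebra_simps power2_eq_square)
qed

lemma C_term_Suc:
  "C_term i (Suc n)
     = fps_X ^ (2 * i + 3) * (1 + fps_X ^ (2 * i + 1)) * geom (2 * i + 1) * B_term (Suc i) n"
proof -
  have X_power: "fps_X ^ ((2 * i + 3) * Suc n) = fps_X ^ (2 * i + 3) * fps_X ^ ((2 * Suc i + 1) * n)"
    by (rule power_split) (simp add: algebra_simps)
  show ?thesis
    unfolding C_term_def B_term_def plus_poch_shift geom_poch_shift X_power by (simp only: ac_simps)
qed

lemma B_series_eq: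
  "(1 - fps_X ^ (2 * i + 1)) * B_series i
     = (1 - fps_X ^ (2 * i + 1)) * geom (2 * i + 1)
       + fps_X ^ (2 * i + 1) * (1 + fps_X ^ (2 * i + 1)) * C_series i"
proof -
  define u :: "int fps" where "u = fps_X ^ (2 * i + 1)"
  define g where "g = geom (2 * i + 1)"
  have B_shift: "fps_infsum (\<lambda>n. B_term i (Suc n)) = B_series i - g"
    using fps_infsum_shift[OF order_ge_index_B_term] by (simp add: B_series_def B_term_0 g_def)
  have C_shift: "fps_infsum (\<lambda>n. C_term i (Suc n)) = C_series i - g"
    using fps_infsum_shift[OF order_ge_index_C_term] by (simp add: C_series_def C_term_0 g_def)
  have "(B_series i - g) - u * (C_series i - g)
      = fps_infsum (\<lambda>n. B_term i (Suc n) - u * C_term i (Suc n))"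
    by (simp add: fps_infsum_diff fps_infsum_mult_left order_ge_index_Suc order_ge_index_C_term
        B_shift C_shift)
  also have "\<dots> = fps_infsum (\<lambda>n. u * B_term i n + fps_X ^ (4 * i + 2) * C_term i n)"
    by (simp only: B_term_Suc u_def)
  also have "\<dots> = u * B_series i + u ^ 2 * C_series i"
    unfolding fps_infsum_add fps_infsum_mult_left[OF order_ge_index_B_term]
      fps_infsum_mult_left[OF order_ge_index_C_term] B_series_def C_series_def u_def
      power_mult[symmetric]
    by (simp add: mult.commute)
  finally show ?thesis
    unfolding u_def[symmetric] g_def[symmetric] by (simp add: algebra_simps power2_eq_square)
qed

lemma C_series_eq:
  "C_series i
     = geom (2 * i + 1)
       + fps_X ^ (2 * i + 3) * (1 + fps_X ^ (2 * i + 1)) * geom (2 * i + 1) * B_series (Suc i)"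
  using fps_infsum_shift[OF order_ge_index_C_term, of i]
  by (simp add: C_series_def B_series_def C_term_0 C_term_Suc fps_infsum_mult_left
      order_ge_index_B_term)

lemma B_series_rec:
  "B_series i
     = (1 + 2 * geom_weighted (2 * i + 1))
       + fps_X ^ (4 * i + 4) * (1 + 4 * geom_weighted (2 * i + 1)) * B_series (Suc i)"
proof -
  define u :: "int fps" where "u = fps_X ^ (2 * i + 1)"
  define g where "g = geom (2 * i + 1)"
  have "B_series i = g * ((1 - u) * B_series i)"
    using one_minus_X_power_mult_geom[of "2 * i + 1"] by (simp add: u_def g_def ac_simps)
  also have "\<dots> = g * ((1 - u) * g
      + u * (1 + u) * (g + fps_X ^ (2 * i + 3) * (1 + u) * g * B_series (Suc i)))"
    by (simp only: u_def g_def B_series_eq C_series_eq)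
  also have "\<dots> = (1 + u ^ 2) * g ^ 2
      + (u * fps_X ^ (2 * i + 3)) * ((1 + u) ^ 2 * g ^ 2) * B_series (Suc i)"
    by (simp add: algebra_simps power2_eq_square)
  also have "u * fps_X ^ (2 * i + 3) = fps_X ^ (4 * i + 4)"
    unfolding u_def by (rule power_split[symmetric]) simp
  finally show ?thesis
    using one_plus_X_power_sq_mult_geom_sq[of "2 * i + 1"]
      one_plus_X_power_double_mult_geom_sq[of "2 * i + 1"]
    by (simp only: u_def g_def zero_less_Suc add_Suc_right add_0_right)
qed

lemma prod_X_power_mult:
  "(\<Prod>i<n. fps_X ^ (4 * i + 4) * r i) = fps_X ^ (2 * n * (n + 1)) * (\<Prod>i<n. r i)"
proof (induction n)
  case (Suc n)
  have X_power: "fps_X ^ (2 * Suc n * (Suc n + 1)) = fps_X ^ (2 * n * (n + 1)) * fps_X ^ (4 * n + 4)"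
    by (rule power_split) (simp add: algebra_simps)
  show ?case
    unfolding prod.lessThan_Suc Suc.IH X_power by (simp only: ac_simps)
qed simp

definition B_weight :: "nat \<Rightarrow> int fps" where
  "B_weight n = (\<Prod>i<n. 1 + 4 * geom_weighted (2 * i + 1)) * (1 + 2 * geom_weighted (2 * n + 1))"

lemma B_series_0_nth: "B_series 0 $ N = (\<Sum>n<Suc N. (fps_X ^ (2 * n * (n + 1)) * B_weight n) $ N)"
proof -
  have "B_series 0 = (\<Sum>n<Suc N. fps_X ^ (2 * n * (n + 1)) * B_weight n)
      + fps_X ^ (2 * Suc N * (Suc N + 1))
        * ((\<Prod>i<Suc N. 1 + 4 * geom_weighted (2 * i + 1)) * B_series (Suc N))"
    using linear_recurrence_unroll[where F = B_series and K = "Suc N"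
        and a = "\<lambda>i. 1 + 2 * geom_weighted (2 * i + 1)"
        and c = "\<lambda>i. fps_X ^ (4 * i + 4) * (1 + 4 * geom_weighted (2 * i + 1))",
        OF B_series_rec]
    by (simp only: prod_X_power_mult B_weight_def mult.assoc)
  moreover have "(fps_X ^ (2 * Suc N * (Suc N + 1)) * Q) $ N = 0" for Q :: "int fps"
    unfolding fps_X_power_mult_nth by simp
  ultimately show ?thesis
    by (simp only: fps_add_nth fps_sum_nth add_0_right)
qed

lemma B_weight_nth_mod_8:
  assumes "4 dvd m"
  shows "8 dvd B_weight n $ m - of_bool (m = 0)"
proof -
  define k where "k = geom_weighted (2 * n + 1)"
  define S where "S = (\<Sum>i<n. geom_weighted (2 * i + 1))"
  obtain y where y: "(\<Prod>i<n. 1 + 4 * geom_weighted (2 * i + 1)) = 1 + 4 * S + 8 * y"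
    unfolding S_def using prod_one_plus_four_mult[of "\<lambda>i. geom_weighted (2 * i + 1)" n] by blast
  define z where "z = y + S * k + 2 * y * k"
  have "B_weight n = 1 + 2 * k + 4 * S + 8 * z"
    unfolding B_weight_def y k_def[symmetric] z_def by (simp add: algebra_simps)
  then have "B_weight n $ m - of_bool (m = 0) = 2 * k $ m + 4 * S $ m + 8 * z $ m"
    by (simp add: fps_numeral_mult_nth)
  moreover have "4 dvd k $ m"
    unfolding k_def using assms by (simp add: four_dvd_geom_weighted_nth)
  moreover have "4 dvd S $ m"
    unfolding S_def fps_sum_nth using assms by (simp add: four_dvd_geom_weighted_nth dvd_sum)
  ultimately show ?thesis
    by (fastforce elim!: dvdE)
qed

lemma eight_dvd_B_series_0_nth:
  assumes "4 dvd N" "\<And>n. N \<noteq> 2 * n * (n + 1)"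
  shows "8 dvd B_series 0 $ N"
  unfolding B_series_0_nth
proof (rule dvd_sum)
  fix n :: nat
  have "even (n * (n + 1))"
    by simp
  then have "2 * 2 dvd 2 * (n * (n + 1))"
    by (rule mult_dvd_mono[OF dvd_refl])
  then have "4 dvd 2 * n * (n + 1)"
    by (simp add: mult.assoc)
  then have "4 dvd N - 2 * n * (n + 1)" and "N - 2 * n * (n + 1) \<noteq> 0" if "2 * n * (n + 1) \<le> N"
    using assms that by (auto simp: dvd_diff_nat)
  then show "8 dvd (fps_X ^ (2 * n * (n + 1)) * B_weight n) $ N"
    using B_weight_nth_mod_8 by (fastforce simp: fps_X_power_mult_nth)
qed

lemma Bterm_eq: "Bterm m = of_int_fps (B_term 0 m)"
proof -
  have odd_powers: "(fps_X :: 'a::comm_ring_1 fps) * (fps_X ^ 2) ^ j = fps_X ^ (2 * j + 1)" for j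
    by (simp add: power_mult)
  have num: "qpoch (- fps_X) (fps_X ^ 2) m = of_int_fps (plus_poch 0 m)"
    unfolding qpoch_def plus_poch_def by (simp add: odd_powers)
  have "(\<Prod>j\<le>m. 1 - fps_X ^ (2 * j + 1)) * geom_poch 0 m = 1"
    unfolding geom_poch_def prod.distrib[symmetric]
    by (intro prod.neutral ballI) (use one_minus_X_power_mult_geom[of "2 * _ + 1"] in simp)
  moreover have "qpoch fps_X (fps_X ^ 2) (Suc m) = of_int_fps (\<Prod>j\<le>m. 1 - fps_X ^ (2 * j + 1))"
    unfolding qpoch_def lessThan_Suc_atMost by (simp add: odd_powers)
  ultimately have den: "qpoch fps_X (fps_X ^ 2) (Suc m) * of_int_fps (geom_poch 0 m) = (1 :: rat fps)"
    by (metis of_int_fps_1 of_int_fps_mult)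
  define D :: "rat fps" where "D = qpoch fps_X (fps_X ^ 2) (Suc m)"
  define F :: "rat fps" where "F = fps_X ^ m * qpoch (- fps_X) (fps_X ^ 2) m * of_int_fps (geom_poch 0 m)"
  have "F * D = fps_X ^ m * qpoch (- fps_X) (fps_X ^ 2) m * (of_int_fps (geom_poch 0 m) * D)"
    unfolding F_def by (simp only: mult.assoc)
  also have "of_int_fps (geom_poch 0 m) * D = 1"
    using den by (simp add: D_def mult.commute)
  finally have "Bterm m = F * D / D"
    by (simp add: Bterm_def D_def)
  also have "\<dots> = F"
    using den by (intro nonzero_mult_div_cancel_right) (auto simp: D_def)
  finally show ?thesis
    by (simp add: F_def B_term_def num)
qed

lemma b_eq_B_series_0_nth: "b N = of_int (B_series 0 $ N)"
proof -
  have "b N = of_int ((\<Sum>m<Suc N. B_term 0 m) $ N)"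
    by (simp add: b_def Bterm_eq lessThan_Suc_atMost fps_sum_nth)
  also have "(\<Sum>m<Suc N. B_term 0 m) $ N = B_series 0 $ N"
    unfolding B_series_def by (rule fps_infsum_nth[symmetric, OF order_ge_index_B_term]) simp
  finally show ?thesis .
qed

lemma nonresidue_scaled_not_square:
  fixes p P c a x :: nat
  assumes "prime p" "Legendre (int a) (int p) = -1" "P > 0"
  shows "x ^ 2 \<noteq> P ^ 2 * (p * c + a)"
proof
  assume x: "x ^ 2 = P ^ 2 * (p * c + a)"
  then have "P ^ 2 dvd x ^ 2"
    by simp
  then have "P dvd x"
    by (simp add: pow_divides_pow_iff)
  then obtain h where "x = P * h" ..
  with x assms(3) have "h ^ 2 = p * c + a"
    by (simp add: power_mult_distrib)
  then have "[int h ^ 2 = int a] (mod int p)"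
    by (metis cong_add_rcancel_0 cong_mult_self_left of_nat_add of_nat_mult of_nat_power)
  then have "QuadRes (int p) (int a)"
    unfolding QuadRes_def by blast
  with assms(2) show False
    by (simp add: Legendre_def split: if_splits)
qed

theorem corollary1p8:
  fixes p l :: nat
  assumes "prime p" and "odd p" and "1 \<le> l" and "l \<le> p - 1"
    and "Legendre (int (8 * l + 1)) (int p) = -1"
  shows "\<forall>n k. \<exists>z::int.
           b (4 * p ^ (2 * k + 3) * n + ((8 * l + 1) * p ^ (2 * k + 2) - 1) div 2) = 8 * of_int z"
proof (intro allI)
  fix n k
  define P where "P = p ^ (k + 1)"
  define N where "N = 4 * p ^ (2 * k + 3) * n + ((8 * l + 1) * p ^ (2 * k + 2) - 1) div 2"
  have "odd P"
    using \<open>odd p\<close> by (simp add: P_def)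
  then obtain s where s: "P ^ 2 = s * 8 + 1"
    using square_mod_8_eq_1_iff cong_le_nat[of 1 "P ^ 2" 8] by (auto simp: Suc_le_eq)
  have P_powers: "p ^ (2 * k + 2) = P ^ 2" "p ^ (2 * k + 3) = P ^ 2 * p"
    unfolding P_def power_mult[symmetric] power_Suc2[symmetric]
    by (rule arg_cong[where f="(^) p"], simp)+
  have N: "N = 4 * (p ^ (2 * k + 3) * n + (8 * l + 1) * s + l)"
    unfolding N_def P_powers(1) s by (simp add: algebra_simps)
  have two_N: "2 * N + 1 = P ^ 2 * (p * (8 * n) + (8 * l + 1))"
    unfolding N P_powers(2) s by (simp add: algebra_simps)
  have "N \<noteq> 2 * j * (j + 1)" for j
  proof
    assume "N = 2 * j * (j + 1)"
    then have "(2 * j + 1) ^ 2 = P ^ 2 * (p * (8 * n) + (8 * l + 1))"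
      unfolding two_N[symmetric] by (simp add: algebra_simps power2_eq_square)
    with nonresidue_scaled_not_square[OF \<open>prime p\<close> assms(5)] \<open>odd P\<close> show False
      by (metis odd_pos)
  qed
  then have "8 dvd B_series 0 $ N"
    by (intro eight_dvd_B_series_0_nth) (simp_all add: N)
  then show "\<exists>z::int. b N = 8 * of_int z"
    by (auto simp: b_eq_B_series_0_nth elim!: dvdE)
qed

end
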